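(* Let $M\in[0,1]^{m\times n}$ with $\|M\|_*\le t$, let $\rho\in[0,1)$ and $\delta\in(0,1)$. Let $Y\in\{0,1\}^{m\times n}$ have independent entries with $P(Y_{ij}=1)=M_{ij}$, and let $A\in\{0,1\}^{m\times n}$ be obtained by revealing each 1 of $Y$ independently with probability $1-\rho$ (so $P(A_{ij}=1)=M_{ij}(1-\rho)$, and $A_{ij}=0$ otherwise). Let $F_u\in\mathbb{R}^{m\times d}$ and $F_v\in\mathbb{R}^{n\times d}$ have orthonormal columns, with rows ${\boldsymbol u}_i$ ($i=1,\dots,m$) and ${\boldsymbol v}_j$ ($j=1,\dots,n$), and set $\mathcal{X}_u=\max_i\|{\boldsymbol u}_i\|$, $\mathcal{X}_v=\max_j\|{\boldsymbol v}_j\|$. Assume $M=F_uF_u^TMF_vF_v^T$. Define $$\tilde{\ell}(x,a)=\begin{cases}\dfrac{(x-1)^2-\rho x^2}{1-\rho} & \text{if } a=1,\\[1mm] x^2 & \text{if } a=0,\end{cases}$$ and let $\hat{D}$ be an optimal solution of $$\min_{D\in\mathbb{R}^{d\times d}}\sum_{i,j}\tilde{\ell}\big((F_uDF_v^T)_{ij},A_{ij}\big)\quad\text{subject to}\quad\|D\|_*\le t,\ 0\le (F_uDF_v^T)_{ij}\le 1\ \forall (i,j).$$ Then, with probability at least $1-\delta$, $$\frac{1}{mn}\sum_{i,j}\big(M_{ij}-(F_u\hat{D}F_v^T)_{ij}\big)^2\le 6\,\frac{\sqrt{\log(2/\delta)}}{\sqrt{mn}\,(1-\rho)}+\frac{4t\sqrt{\log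 2d}}{\sqrt{mn}\sqrt{1-\rho}}\,\mathcal{X}_u\mathcal{X}_v .$$
   Context: $\|\cdot\|_*$ is the nuclear norm. This is the inductive version of shifted matrix completion for PU learning in the non-deterministic setting, where row features $F_u$ and column features $F_v$ are given and the estimate is $F_u\hat{D}F_v^T$. *)

theory Defs
  imports "Jordan_Normal_Form.Char_Poly" "HOL-Probability.Product_PMF"
begin

text \<open>Nuclear norm: sum of the singular values of A, i.e. the square roots of the
  eigenvalues (with algebraic multiplicity) of A^T A, the roots of its characteristic polynomial.\<close>
definition nuclear_norm :: "real mat \<Rightarrow> real" where
  "nuclear_norm A = sum_mset (image_mset sqrt (proots (char_poly (transpose_mat A * A))))"

definition loss_tilde :: "real \<Rightarrow> real \<Rightarrow> real \<Rightarrow> real" where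
  "loss_tilde \<rho> x a = (if a = 1 then ((x - 1)^2 - \<rho> * x^2) / (1 - \<rho>) else x^2)"

definition row_norm :: "real mat \<Rightarrow> nat \<Rightarrow> real" where
  "row_norm F i = sqrt (\<Sum>k<dim_col F. (F $$ (i,k))^2)"

definition feasible_D ::
  "real mat \<Rightarrow> real mat \<Rightarrow> nat \<Rightarrow> real \<Rightarrow> real mat \<Rightarrow> bool" where
  "feasible_D Fu Fv d t D \<longleftrightarrow> D \<in> carrier_mat d d \<and> nuclear_norm D \<le> t \<and>
     (\<forall>i<dim_row Fu. \<forall>j<dim_row Fv.
        0 \<le> (Fu * D * transpose_mat Fv) $$ (i,j) \<and> (Fu * D * transpose_mat Fv) $$ (i,j) \<le> 1)"

definition objective :: "real \<Rightarrow> real mat \<Rightarrow> real mat \<Rightarrow> real mat \<Rightarrow> real mat \<Rightarrow> real" where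
  "objective \<rho> Fu Fv A D =
     (\<Sum>i<dim_row Fu. \<Sum>j<dim_row Fv. loss_tilde \<rho> ((Fu * D * transpose_mat Fv) $$ (i,j)) (A $$ (i,j)))"

definition optimal_D ::
  "real \<Rightarrow> real mat \<Rightarrow> real mat \<Rightarrow> nat \<Rightarrow> real \<Rightarrow> real mat \<Rightarrow> real mat \<Rightarrow> bool" where
  "optimal_D \<rho> Fu Fv d t A D \<longleftrightarrow> feasible_D Fu Fv d t D \<and>
     (\<forall>D'. feasible_D Fu Fv d t D' \<longrightarrow> objective \<rho> Fu Fv A D \<le> objective \<rho> Fu Fv A D')"

text \<open>Sampling: for each entry, Y_ij ~ Bernoulli(M_ij) and an independent reveal bit
  R_ij ~ Bernoulli(1-rho), all independent; A_ij = 1 iff Y_ij = 1 and R_ij = 1.\<close>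
definition sample_pmf :: "real mat \<Rightarrow> real \<Rightarrow> (nat \<times> nat \<Rightarrow> bool \<times> bool) pmf" where
  "sample_pmf M \<rho> = Pi_pmf ({..<dim_row M} \<times> {..<dim_col M}) (False, False)
      (\<lambda>(i,j). pair_pmf (bernoulli_pmf (M $$ (i,j))) (bernoulli_pmf (1 - \<rho>)))"

definition A_of :: "nat \<Rightarrow> nat \<Rightarrow> (nat \<times> nat \<Rightarrow> bool \<times> bool) \<Rightarrow> real mat" where
  "A_of m n \<omega> = Matrix.mat m n (\<lambda>(i,j). if fst (\<omega> (i,j)) \<and> snd (\<omega> (i,j)) then 1 else 0)"

end

theory Submission
  imports Defs "HOL-Probability.Hoeffding" "Jordan_Normal_Form.Schur_Decomposition"
begin

text \<open>Comparing the objective at \<open>D\<^sub>hat\<close> with its value at \<open>D\<^sub>* = Fu\<^sup>T M Fv\<close>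
  (feasible, since \<open>M\<close> lies in the span of the features and the nuclear norm is invariant
  under the isometries), the unbiasedness of the shifted loss bounds the squared error by
  \<open>2/(1 - \<rho>)\<close> times the supremum over the feasible set of the linear deviation
  \<open>\<langle>N, X - M\<rangle>\<close>, where \<open>N = A - (1 - \<rho>) M\<close> is the centred observation noise.
  Changing one sampled entry moves this supremum by at most 1, so McDiarmid's inequality
  concentrates it around its mean. The mean is bounded by Cauchy--Schwarz in the
  \<open>d \<times> d\<close> coordinates: feasible differences have Frobenius norm at most
  \<open>min (2t) (\<surd>(mn))\<close> (Frobenius norm \<open>\<le>\<close> nuclear norm), and by independence the projected
  noise \<open>Fu\<^sup>T N Fv\<close> has expected squared Frobenius norm at most \<open>(1 - \<rho>) d\<^sup>2\<close>.\<close>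

section \<open>Bounded differences for finite product distributions\<close>

lemma expectation_pair_pmf_iterated:
  fixes F :: "_ \<Rightarrow> real"
  assumes fin_A: "finite (set_pmf A)" and fin_B: "finite (set_pmf B)"
  shows "measure_pmf.expectation (pair_pmf A B) F =
         measure_pmf.expectation A (\<lambda>a. measure_pmf.expectation B (\<lambda>b. F (a,b)))"
proof -
  have inner: "measure_pmf.expectation B (\<lambda>b. F (a,b)) = (\<Sum>b\<in>set_pmf B. F (a,b) * pmf B b)" for a
    by (rule integral_measure_pmf_real) (use fin_B in auto)
  have "measure_pmf.expectation (pair_pmf A B) F = (\<Sum>z\<in>set_pmf A \<times> set_pmf B. F z * pmf (pair_pmf A B) z)"
    by (rule integral_measure_pmf_real) (use fin_A fin_B in auto)
  also have "\<dots> = (\<Sum>a\<in>set_pmf A. \<Sum>b\<in>set_pmf B. F (a,b) * (pmf A a * pmf B b))"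
    by (subst sum.cartesian_product) (rule sum.cong, auto simp: pmf_pair)
  also have "\<dots> = (\<Sum>a\<in>set_pmf A. (\<Sum>b\<in>set_pmf B. F (a,b) * pmf B b) * pmf A a)"
    by (simp add: sum_distrib_left sum_distrib_right mult_ac)
  also have "\<dots> = measure_pmf.expectation A (\<lambda>a. measure_pmf.expectation B (\<lambda>b. F (a,b)))"
    unfolding inner by (rule integral_measure_pmf_real[symmetric]) (use fin_A in auto)
  finally show ?thesis .
qed

lemma expectation_pair_bernoulli_pmf:
  fixes h :: "bool \<times> bool \<Rightarrow> real"
  assumes "0 \<le> q" "q \<le> 1" "0 \<le> r" "r \<le> 1"
  shows "measure_pmf.expectation (pair_pmf (bernoulli_pmf q) (bernoulli_pmf r)) h
     = q * r * h (True, True) + q * (1 - r) * h (True, False) + (1 - q) * r * h (False, True)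
       + (1 - q) * (1 - r) * h (False, False)"
  by (subst expectation_pair_pmf_iterated) (use assms in \<open>auto simp: algebra_simps\<close>)

lemma finite_set_Pi_pmf:
  fixes P :: "'i \<Rightarrow> 'b::finite pmf"
  assumes "finite I"
  shows "finite (set_pmf (Pi_pmf I dflt P))"
proof (rule finite_subset)
  show "set_pmf (Pi_pmf I dflt P) \<subseteq> PiE_dflt I dflt (\<lambda>_. UNIV)"
    using set_Pi_pmf_subset[OF assms, of dflt P] unfolding PiE_dflt_def by auto
qed (use assms in auto)

lemma expectation_Pi_pmf_insert:
  fixes P :: "'i \<Rightarrow> 'b::finite pmf" and F :: "('i \<Rightarrow> 'b) \<Rightarrow> real"
  assumes "finite I" "x \<notin> I"
  shows "measure_pmf.expectation (Pi_pmf (insert x I) dflt P) F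
      = measure_pmf.expectation (P x) (\<lambda>y. measure_pmf.expectation (Pi_pmf I dflt P) (\<lambda>g. F (g(x:=y))))"
  unfolding Pi_pmf_insert[OF assms] integral_map_pmf
  by (subst expectation_pair_pmf_iterated) (simp_all add: finite_set_Pi_pmf assms(1))

lemma expectation_Pi_pmf_component:
  fixes P :: "'i \<Rightarrow> 'b::finite pmf" and g :: "'b \<Rightarrow> real"
  assumes "finite I" "k \<in> I"
  shows "measure_pmf.expectation (Pi_pmf I dflt P) (\<lambda>w. g (w k)) = measure_pmf.expectation (P k) g"
proof -
  have "map_pmf (\<lambda>w. w k) (Pi_pmf I dflt P) = P k"
    using Pi_pmf_component[OF assms(1), of k dflt P] assms(2) by simp
  then show ?thesis
    by (metis integral_map_pmf)
qed

lemma expectation_Pi_pmf_two_components: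
  fixes P :: "'i \<Rightarrow> 'b::finite pmf" and g :: "'b \<Rightarrow> 'b \<Rightarrow> real"
  assumes fin: "finite I" and "k \<in> I" "l \<in> I" "k \<noteq> l"
  shows "measure_pmf.expectation (Pi_pmf I dflt P) (\<lambda>w. g (w k) (w l))
       = measure_pmf.expectation (P k) (\<lambda>y. measure_pmf.expectation (P l) (\<lambda>z. g y z))"
proof -
  have I: "I = insert k (I - {k})" and l: "l \<in> I - {k}"
    using assms by auto
  show ?thesis
    by (subst I, subst expectation_Pi_pmf_insert)
       (use fin l assms(4) in \<open>simp_all add: expectation_Pi_pmf_component\<close>)
qed

text \<open>Cross terms of independent centred variables vanish.\<close>
lemma expectation_Pi_pmf_sum_sq:
  fixes P :: "'i \<Rightarrow> 'b::finite pmf" and \<alpha> :: "'i \<Rightarrow> 'b \<Rightarrow> real" and c :: "'i \<Rightarrow> real"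
  assumes fin: "finite I" and centred: "\<And>k. k \<in> I \<Longrightarrow> measure_pmf.expectation (P k) (\<alpha> k) = 0"
  shows "measure_pmf.expectation (Pi_pmf I dflt P) (\<lambda>w. (\<Sum>k\<in>I. c k * \<alpha> k (w k))^2)
       = (\<Sum>k\<in>I. (c k)^2 * measure_pmf.expectation (P k) (\<lambda>y. (\<alpha> k y)^2))"
proof -
  let ?Q = "Pi_pmf I dflt P"
  have cross: "measure_pmf.expectation ?Q (\<lambda>w. (c k * \<alpha> k (w k)) * (c l * \<alpha> l (w l)))
        = (if k = l then (c k)^2 * measure_pmf.expectation (P k) (\<lambda>y. (\<alpha> k y)^2) else 0)"
    if "k \<in> I" "l \<in> I" for k l
  proof (cases "k = l")
    case True
    then show ?thesis
      using expectation_Pi_pmf_component[OF fin \<open>k \<in> I\<close>, of dflt P "\<lambda>y. (c k)^2 * (\<alpha> k y)^2"]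
      by (simp add: power2_eq_square mult_ac)
  next
    case False
    have "measure_pmf.expectation ?Q (\<lambda>w. (c k * \<alpha> k (w k)) * (c l * \<alpha> l (w l)))
        = measure_pmf.expectation (P k)
            (\<lambda>y. measure_pmf.expectation (P l) (\<lambda>z. (c k * \<alpha> k y) * (c l * \<alpha> l z)))"
      by (rule expectation_Pi_pmf_two_components[OF fin that False])
    also have "\<dots> = 0"
      using centred[OF \<open>l \<in> I\<close>] by simp
    finally show ?thesis
      using False by simp
  qed
  have "measure_pmf.expectation ?Q (\<lambda>w. (\<Sum>k\<in>I. c k * \<alpha> k (w k))^2)
      = (\<Sum>k\<in>I. \<Sum>l\<in>I. measure_pmf.expectation ?Q (\<lambda>w. (c k * \<alpha> k (w k)) * (c l * \<alpha> l (w l))))"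
    unfolding power2_eq_square sum_product
    by (simp add: Bochner_Integration.integral_sum integrable_measure_pmf_finite finite_set_Pi_pmf fin)
  also have "\<dots> = (\<Sum>k\<in>I. (c k)^2 * measure_pmf.expectation (P k) (\<lambda>y. (\<alpha> k y)^2))"
    using fin by (simp add: cross sum.delta)
  finally show ?thesis .
qed

lemma expectation_le_sqrt_second_moment:
  fixes Q :: "'a pmf" and Y :: "'a \<Rightarrow> real"
  assumes "finite (set_pmf Q)"
  shows "measure_pmf.expectation Q Y \<le> sqrt (measure_pmf.expectation Q (\<lambda>w. (Y w)^2))"
proof -
  let ?c = "measure_pmf.expectation Q Y"
  have int: "integrable (measure_pmf Q) f" for f :: "'a \<Rightarrow> real"
    using assms by (rule integrable_measure_pmf_finite)
  have "(\<lambda>w. (Y w - ?c)^2) = (\<lambda>w. (Y w)^2 - 2 * ?c * Y w + ?c^2)"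
    by (auto simp: power2_eq_square algebra_simps)
  then have "0 \<le> measure_pmf.expectation Q (\<lambda>w. (Y w)^2) - ?c^2"
    using integral_nonneg_AE[of "\<lambda>w. (Y w - ?c)^2" Q] by (simp add: int power2_eq_square)
  then show ?thesis
    by (metis diff_ge_0_iff_ge real_le_rsqrt)
qed

lemma expectation_pmf_le_add_const:
  fixes F G :: "'a \<Rightarrow> real"
  assumes "finite (set_pmf Q)" and "\<And>w. F w \<le> G w + c"
  shows "measure_pmf.expectation Q F \<le> measure_pmf.expectation Q G + c"
proof -
  have "measure_pmf.expectation Q F \<le> measure_pmf.expectation Q (\<lambda>w. G w + c)"
    by (intro integral_mono) (use assms in \<open>auto intro: integrable_measure_pmf_finite\<close>)
  also have "\<dots> = measure_pmf.expectation Q G + c"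
    by (subst Bochner_Integration.integral_add) (use assms(1) in \<open>auto intro: integrable_measure_pmf_finite\<close>)
  finally show ?thesis .
qed

lemma Hoeffdings_lemma_pmf:
  fixes p :: "'b::finite pmf" and h :: "'b \<Rightarrow> real"
  assumes oscillation: "\<And>y y'. h y \<le> h y' + c" and "l > 0"
  shows "measure_pmf.expectation p (\<lambda>y. exp (l * (h y - measure_pmf.expectation p h)))
          \<le> exp (l^2 * c^2 / 8)"
proof -
  define a where "a = Min (range h)"
  have "a \<in> range h"
    unfolding a_def by (intro Min_in) auto
  then obtain y0 where "a = h y0"
    by blast
  have "a \<le> h y" for y
    unfolding a_def by (intro Min_le) auto
  moreover have "h y \<le> a + c" for y
    using oscillation[of y y0] \<open>a = h y0\<close> by simp
  ultimately interpret interval_bounded_random_variable "measure_pmf p" h a "a + c"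
    by unfold_locales auto
  have "nn_integral (measure_pmf p) (\<lambda>x. ennreal (exp (l * (h x - measure_pmf.expectation p h))))
     = ennreal (measure_pmf.expectation p (\<lambda>x. exp (l * (h x - measure_pmf.expectation p h))))"
    by (rule nn_integral_eq_integral) (auto intro: integrable_measure_pmf_finite)
  with Hoeffdings_lemma_nn_integral[OF \<open>l > 0\<close>] show ?thesis
    by (simp add: ennreal_le_iff)
qed

text \<open>McDiarmid's bounded differences inequality, by induction on the index set: conditioning on
  one coordinate, the conditional mean varies by at most \<open>c\<close>, so Hoeffding's lemma applies to it.\<close>
lemma mcdiarmid_Pi_pmf_mgf:
  fixes P :: "'i \<Rightarrow> 'b::finite pmf" and f :: "('i \<Rightarrow> 'b) \<Rightarrow> real"
  assumes "finite I" and "l > 0"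
    and "\<And>w i y. i \<in> I \<Longrightarrow> \<bar>f (w(i:=y)) - f w\<bar> \<le> c"
  shows "measure_pmf.expectation (Pi_pmf I dflt P)
           (\<lambda>w. exp (l * (f w - measure_pmf.expectation (Pi_pmf I dflt P) f)))
         \<le> exp (l^2 * c^2 * real (card I) / 8)"
  using assms(1,3)
proof (induction I arbitrary: f rule: finite_induct)
  case empty
  then show ?case by simp
next
  case (insert x I)
  let ?Q = "Pi_pmf I dflt P" and ?E = "measure_pmf.expectation"
  define h where "h y = ?E ?Q (\<lambda>g. f (g(x:=y)))" for y
  define \<mu> where "\<mu> = ?E (P x) h"
  have fin_Q: "finite (set_pmf ?Q)"
    using insert.hyps(1) by (rule finite_set_Pi_pmf)
  note E_insert = expectation_Pi_pmf_insert[OF insert.hyps]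
  have mean: "?E (Pi_pmf (insert x I) dflt P) f = \<mu>"
    unfolding E_insert \<mu>_def h_def ..
  have fibre: "?E ?Q (\<lambda>g. exp (l * (f (g(x:=y)) - h y))) \<le> exp (l^2 * c^2 * real (card I) / 8)" for y
  proof -
    have "\<bar>f ((g(i:=z))(x:=y)) - f (g(x:=y))\<bar> \<le> c" if "i \<in> I" for g i z
    proof -
      have "(g(i:=z))(x:=y) = (g(x:=y))(i:=z)"
        using that insert.hyps(2) by (auto simp: fun_upd_twist)
      moreover have "\<bar>f ((g(x:=y))(i:=z)) - f (g(x:=y))\<bar> \<le> c"
        using that by (intro insert.prems) simp
      ultimately show ?thesis
        by (simp only:)
    qed
    from insert.IH[of "\<lambda>g. f (g(x:=y))", OF this]
    show ?thesis
      unfolding h_def by simp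
  qed
  have h_diff: "h y \<le> h y' + c" for y y'
    unfolding h_def
  proof (rule expectation_pmf_le_add_const[OF fin_Q])
    show "f (g(x:=y)) \<le> f (g(x:=y')) + c" for g
      using insert.prems[of x "g(x:=y')" y] by (simp del: fun_upd_apply)
  qed
  have "?E (Pi_pmf (insert x I) dflt P) (\<lambda>w. exp (l * (f w - ?E (Pi_pmf (insert x I) dflt P) f)))
      = ?E (P x) (\<lambda>y. exp (l * (h y - \<mu>)) * ?E ?Q (\<lambda>g. exp (l * (f (g(x:=y)) - h y))))"
  proof -
    have "exp (l * (f (g(x:=y)) - \<mu>)) = exp (l * (h y - \<mu>)) * exp (l * (f (g(x:=y)) - h y))" for g y
      by (simp add: mult_exp_exp algebra_simps)
    then show ?thesis
      unfolding mean unfolding E_insert by simp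
  qed
  also have "\<dots> \<le> ?E (P x) (\<lambda>y. exp (l * (h y - \<mu>)) * exp (l^2 * c^2 * real (card I) / 8))"
    by (intro integral_mono_AE)
       (use fibre in \<open>auto intro: integrable_measure_pmf_finite mult_left_mono simp: AE_measure_pmf_iff\<close>)
  also have "\<dots> = ?E (P x) (\<lambda>y. exp (l * (h y - \<mu>))) * exp (l^2 * c^2 * real (card I) / 8)"
    by simp
  also have "\<dots> \<le> exp (l^2 * c^2 / 8) * exp (l^2 * c^2 * real (card I) / 8)"
    using Hoeffdings_lemma_pmf[of h c l "P x", OF h_diff \<open>l > 0\<close>]
    by (intro mult_right_mono) (auto simp: \<mu>_def)
  also have "\<dots> = exp (l^2 * c^2 * real (card (insert x I)) / 8)"
    using insert.hyps by (simp add: mult_exp_exp[symmetric] algebra_simps add_divide_distrib)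
  finally show ?case .
qed

lemma mcdiarmid_Pi_pmf:
  fixes P :: "'i \<Rightarrow> 'b::finite pmf" and f :: "('i \<Rightarrow> 'b) \<Rightarrow> real"
  assumes fin: "finite I" and "card I > 0" and "c > 0" and "s > 0"
    and bounded_diff: "\<And>w i y. i \<in> I \<Longrightarrow> \<bar>f (w(i:=y)) - f w\<bar> \<le> c"
  shows "measure_pmf.prob (Pi_pmf I dflt P)
           {w. f w \<ge> measure_pmf.expectation (Pi_pmf I dflt P) f + s}
         \<le> exp (- 2 * s^2 / (c^2 * real (card I)))"
proof -
  let ?Q = "Pi_pmf I dflt P"
  let ?E = "measure_pmf.expectation ?Q f"
  define l where "l = 4 * s / (c^2 * card I)"
  have "l > 0"
    unfolding l_def using assms by simp
  have "{w. f w \<ge> ?E + s} = {w \<in> space (measure_pmf ?Q). exp (l * (f w - ?E)) \<ge> exp (l * s)}"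
    using \<open>l > 0\<close> by (auto simp: mult_le_cancel_left_pos)
  then have "measure_pmf.prob ?Q {w. f w \<ge> ?E + s}
       = measure_pmf.prob ?Q {w \<in> space (measure_pmf ?Q). exp (l * (f w - ?E)) \<ge> exp (l * s)}"
    by simp
  also have "\<dots> \<le> measure_pmf.expectation ?Q (\<lambda>w. exp (l * (f w - ?E))) / exp (l * s)"
    by (rule integral_Markov_inequality_measure[where A = "space (measure_pmf ?Q)"])
       (use fin in \<open>auto intro: integrable_measure_pmf_finite finite_set_Pi_pmf\<close>)
  also have "\<dots> \<le> exp (l^2 * c^2 * card I / 8) / exp (l * s)"
    by (intro divide_right_mono mcdiarmid_Pi_pmf_mgf[OF fin \<open>l > 0\<close> bounded_diff]) auto
  also have "\<dots> = exp (- 2 * s^2 / (c^2 * card I))"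
    unfolding l_def using assms by (simp add: exp_diff[symmetric] field_simps power2_eq_square)
  finally show ?thesis .
qed

section \<open>Traces, singular values and the nuclear norm\<close>

definition mat_trace :: "'a::comm_ring_1 mat \<Rightarrow> 'a" where
  "mat_trace A = (\<Sum>i<dim_row A. A $$ (i,i))"

lemma index_mult_mat_sum:
  assumes "i < dim_row A" "j < dim_col B" "dim_col A = dim_row B"
  shows "(A * B) $$ (i,j) = (\<Sum>k<dim_col A. A $$ (i,k) * B $$ (k,j))"
  using assms by (auto simp: scalar_prod_def atLeast0LessThan intro!: sum.cong)

lemma mat_trace_mult_comm:
  assumes A: "A \<in> carrier_mat n k" and B: "B \<in> carrier_mat k n"
  shows "mat_trace (A * B) = mat_trace (B * A)"
proof -
  have "mat_trace (A * B) = (\<Sum>i<n. \<Sum>j<k. A $$ (i,j) * B $$ (j,i))"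
    unfolding mat_trace_def using A B by (auto simp: scalar_prod_def lessThan_atLeast0 intro!: sum.cong)
  also have "\<dots> = (\<Sum>j<k. \<Sum>i<n. B $$ (j,i) * A $$ (i,j))"
    by (subst sum.swap) (simp add: mult.commute)
  also have "\<dots> = mat_trace (B * A)"
    unfolding mat_trace_def using A B by (auto simp: scalar_prod_def lessThan_atLeast0 intro!: sum.cong)
  finally show ?thesis .
qed

lemma mat_trace_similar_mat_wit:
  assumes "similar_mat_wit A T P Q"
  shows "mat_trace A = mat_trace T"
proof -
  define n where "n = dim_row A"
  have c: "T \<in> carrier_mat n n" "P \<in> carrier_mat n n" "Q \<in> carrier_mat n n"
    and QP: "Q * P = 1\<^sub>m n" and A: "A = P * T * Q"
    using assms unfolding similar_mat_wit_def Let_def n_def[symmetric] by blast+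
  have "mat_trace A = mat_trace (Q * (P * T))"
    unfolding A using c by (intro mat_trace_mult_comm) auto
  also have "Q * (P * T) = T"
    using c by (simp add: assoc_mult_mat[symmetric, of Q n n P n T] QP)
  finally show ?thesis .
qed

lemma sum_sq_entries_eq_mat_trace:
  fixes A :: "'a::comm_ring_1 mat"
  assumes A: "A \<in> carrier_mat r c"
  shows "(\<Sum>i<r. \<Sum>j<c. (A $$ (i,j))^2) = mat_trace (transpose_mat A * A)"
proof -
  have "mat_trace (transpose_mat A * A) = (\<Sum>j<c. \<Sum>i<r. A $$ (i,j) * A $$ (i,j))"
    unfolding mat_trace_def using A by (auto simp: scalar_prod_def lessThan_atLeast0 intro!: sum.cong)
  then show ?thesis
    by (subst sum.swap) (simp add: power2_eq_square)
qed

lemma L2_set_times_lessThan: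
  "L2_set g ({..<r} \<times> {..<c}) = sqrt (\<Sum>a<r. \<Sum>b<c. (g (a,b))^2)"
  unfolding L2_set_def by (simp add: sum.cartesian_product)

lemma sqrt_sum_list_le_sum_list_sqrt:
  assumes "\<forall>r\<in>set rs. r \<ge> 0"
  shows "sqrt (sum_list rs) \<le> sum_list (map sqrt rs)"
  using assms
proof (induction rs)
  case (Cons r rs)
  then have "sqrt (r + sum_list rs) \<le> sqrt r + sqrt (sum_list rs)"
    by (intro sqrt_add_le_add_sqrt) (auto intro: sum_list_nonneg)
  with Cons show ?case
    by simp
qed simp

lemma cnj_quadratic_form_gram:
  fixes A :: "real mat" and v :: "complex Matrix.vec"
  assumes A: "A \<in> carrier_mat r c" and v: "v \<in> carrier_vec c"
  shows "(\<Sum>k<c. cnj (v$k) * (map_mat complex_of_real (transpose_mat A * A) *\<^sub>v v) $ k)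
       = of_real (\<Sum>i<r. (cmod (\<Sum>l<c. of_real (A$$(i,l)) * v$l))^2)"
proof -
  define w where "w i = (\<Sum>l<c. of_real (A$$(i,l)) * v$l)" for i
  have entry: "(map_mat complex_of_real (transpose_mat A * A) *\<^sub>v v) $ k
      = (\<Sum>l<c. \<Sum>i<r. of_real (A$$(i,k)) * of_real (A$$(i,l)) * v $ l)" if "k < c" for k
    using that A v
    by (auto simp: scalar_prod_def atLeast0LessThan index_mult_mat_sum sum_distrib_right
             intro!: sum.cong)
  have "(\<Sum>k<c. cnj (v$k) * (map_mat complex_of_real (transpose_mat A * A) *\<^sub>v v) $ k)
      = (\<Sum>i<r. \<Sum>k<c. \<Sum>l<c. (of_real (A$$(i,k)) * cnj (v$k)) * (of_real (A$$(i,l)) * v$l))"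
    by (simp add: entry sum_distrib_left mult_ac sum.swap[of _ "{..<r}"])
  also have "\<dots> = (\<Sum>i<r. cnj (w i) * w i)"
    unfolding w_def by (simp add: cnj_sum sum_product)
  also have "\<dots> = of_real (\<Sum>i<r. (cmod (w i))^2)"
    unfolding of_real_sum complex_norm_square by (simp add: mult.commute)
  finally show ?thesis
    unfolding w_def .
qed

lemma eigenvalue_gram_real_nonneg:
  fixes A :: "real mat" and a :: complex
  assumes A: "A \<in> carrier_mat r c"
    and ev: "eigenvalue (map_mat complex_of_real (transpose_mat A * A)) a"
  shows "a = complex_of_real (Re a) \<and> Re a \<ge> 0"
proof -
  let ?B = "map_mat complex_of_real (transpose_mat A * A)"
  obtain v where v: "v \<in> carrier_vec c" "v \<noteq> 0\<^sub>v c" "?B *\<^sub>v v = a \<cdot>\<^sub>v v"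
    using ev A unfolding eigenvalue_def eigenvector_def by auto
  define Nv where "Nv = (\<Sum>k<c. (cmod (v$k))^2)"
  define Nw where "Nw = (\<Sum>i<r. (cmod (\<Sum>l<c. of_real (A$$(i,l)) * v$l))^2)"
  obtain k where k: "k < c" "v$k \<noteq> 0"
    using v(1,2) by (metis eq_vecI carrier_vecD index_zero_vec)
  have "0 < (cmod (v$k))^2"
    using k by simp
  also have "\<dots> \<le> Nv"
    unfolding Nv_def by (rule member_le_sum) (use k in auto)
  finally have "Nv > 0" .
  have "(\<Sum>k<c. cnj (v$k) * (?B *\<^sub>v v) $ k) = a * of_real Nv"
    using v(1) unfolding Nv_def of_real_sum complex_norm_square
    by (simp add: v(3) sum_distrib_left mult_ac)
  then have "a * of_real Nv = of_real Nw"
    unfolding Nw_def cnj_quadratic_form_gram[OF A v(1)] by simp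
  then have "a = of_real (Nw / Nv)"
    using \<open>Nv > 0\<close> by (simp add: field_simps)
  moreover have "Nw \<ge> 0"
    unfolding Nw_def by (intro sum_nonneg) auto
  ultimately show ?thesis
    using \<open>Nv > 0\<close> by simp
qed

interpretation of_real_poly_hom: map_poly_inj_idom_hom "of_real :: real \<Rightarrow> complex" ..

lemma proots_prod_list_linear: "proots (\<Prod>x\<leftarrow>rs. [:- x, 1:]) = mset (rs :: real list)"
proof (induction rs)
  case (Cons r rs)
  have "(\<Prod>x\<leftarrow>rs. [:- x, 1:]) \<noteq> (0::real poly)"
    by (auto simp: prod_list_zero_iff)
  then have "proots ([:- r, 1:] * (\<Prod>x\<leftarrow>rs. [:- x, 1:])) = proots [:- r, 1:] + proots (\<Prod>x\<leftarrow>rs. [:- x, 1:])"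
    by (intro proots_mult) auto
  with Cons show ?case
    using proots_linear_factor[of "- r"] by simp
qed simp

text \<open>The complex factorisation of the characteristic polynomial has only real non-negative
  roots, so it descends to a factorisation over the reals.\<close>
lemma char_poly_gram_factorization:
  fixes A :: "real mat"
  assumes A: "A \<in> carrier_mat r c"
  obtains rs where "char_poly (transpose_mat A * A) = (\<Prod>x\<leftarrow>rs. [:- x, 1:])"
    and "\<forall>x\<in>set rs. x \<ge> 0"
proof -
  let ?B = "transpose_mat A * A"
  have B: "map_mat complex_of_real ?B \<in> carrier_mat c c"
    using A by simp
  obtain as where cp: "char_poly (map_mat complex_of_real ?B) = (\<Prod>a\<leftarrow>as. [:- a, 1:])"
    using char_poly_factorized[OF B] by blast
  have real_root: "a = complex_of_real (Re a) \<and> Re a \<ge> 0" if "a \<in> set as" for a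
  proof -
    have "poly (char_poly (map_mat complex_of_real ?B)) a = 0"
      unfolding cp poly_prod_list using that by (auto simp: prod_list_zero_iff)
    then show ?thesis
      using eigenvalue_gram_real_nonneg[OF A] eigenvalue_root_char_poly[OF B] by blast
  qed
  define rs where "rs = map Re as"
  have "map_poly complex_of_real (char_poly ?B) = char_poly (map_mat complex_of_real ?B)"
    using A by (intro of_real_hom.char_poly_hom[symmetric]) auto
  also have "\<dots> = (\<Prod>x\<leftarrow>rs. [:- complex_of_real x, 1:])"
    unfolding cp rs_def map_map
    by (intro arg_cong[where f=prod_list] map_cong refl) (metis real_root comp_apply)
  also have "\<dots> = map_poly complex_of_real (\<Prod>x\<leftarrow>rs. [:- x, 1:])"
    unfolding of_real_poly_hom.hom_prod_list map_map o_def
    by (intro arg_cong[where f=prod_list] map_cong refl) (simp add: of_real_hom.map_poly_pCons_hom)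
  finally have "char_poly ?B = (\<Prod>x\<leftarrow>rs. [:- x, 1:])"
    by (simp only: of_real_poly_hom.eq_iff)
  moreover have "\<forall>x\<in>set rs. x \<ge> 0"
    using real_root unfolding rs_def by auto
  ultimately show ?thesis
    using that by blast
qed

text \<open>The squared Frobenius norm is the trace of \<open>A\<^sup>T A\<close>, i.e. the sum of its eigenvalues;
  their square roots are the singular values.\<close>
lemma frobenius_le_nuclear_norm:
  fixes A :: "real mat"
  assumes A: "A \<in> carrier_mat r c"
  shows "sqrt (\<Sum>i<r. \<Sum>j<c. (A $$ (i,j))^2) \<le> nuclear_norm A"
proof -
  let ?B = "transpose_mat A * A"
  have B: "?B \<in> carrier_mat c c"
    using A by simp
  obtain rs where cp: "char_poly ?B = (\<Prod>x\<leftarrow>rs. [:- x, 1:])" and nonneg: "\<forall>x\<in>set rs. x \<ge> 0"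
    using char_poly_gram_factorization[OF A] by blast
  have nuclear: "nuclear_norm A = sum_list (map sqrt rs)"
    unfolding nuclear_norm_def cp proots_prod_list_linear
    by (simp only: mset_map[symmetric] sum_mset_sum_list)
  obtain T P Q where "schur_decomposition ?B rs = (T,P,Q)"
    by (cases "schur_decomposition ?B rs") auto
  from schur_decomposition[OF B cp this]
  have "similar_mat_wit ?B T P Q" and "diag_mat T = rs"
    by auto
  then have "mat_trace ?B = sum_list rs"
    unfolding mat_trace_similar_mat_wit[OF \<open>similar_mat_wit ?B T P Q\<close>]
    by (auto simp: mat_trace_def diag_mat_def sum_list_sum_nth atLeast0LessThan)
  then show ?thesis
    using sum_sq_entries_eq_mat_trace[OF A] sqrt_sum_list_le_sum_list_sqrt[OF nonneg] nuclear
    by simp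
qed

lemma det_four_block_mat_schur_complement:
  fixes A B :: "'a::idom mat"
  assumes A: "A \<in> carrier_mat n d" and B: "B \<in> carrier_mat d n"
  shows "Determinant.det (four_block_mat (x \<cdot>\<^sub>m 1\<^sub>m d) B A (1\<^sub>m n)) = Determinant.det (x \<cdot>\<^sub>m 1\<^sub>m d - B * A)"
proof -
  define U where "U = four_block_mat (1\<^sub>m d) B (0\<^sub>m n d) (1\<^sub>m n)"
  define L where "L = four_block_mat (x \<cdot>\<^sub>m 1\<^sub>m d - B * A) (0\<^sub>m d n) A (1\<^sub>m n)"
  have BA: "B * A \<in> carrier_mat d d"
    using A B by auto
  have "U * L = four_block_mat (1\<^sub>m d * (x \<cdot>\<^sub>m 1\<^sub>m d - B * A) + B * A) (1\<^sub>m d * 0\<^sub>m d n + B * 1\<^sub>m n)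
      (0\<^sub>m n d * (x \<cdot>\<^sub>m 1\<^sub>m d - B * A) + 1\<^sub>m n * A) (0\<^sub>m n d * 0\<^sub>m d n + 1\<^sub>m n * 1\<^sub>m n)"
    unfolding U_def L_def by (rule mult_four_block_mat) (use A B BA in auto)
  also have "1\<^sub>m d * (x \<cdot>\<^sub>m 1\<^sub>m d - B * A) + B * A = x \<cdot>\<^sub>m 1\<^sub>m d"
    unfolding left_mult_one_mat[OF minus_carrier_mat[OF BA]] using A B by (intro eq_matI) auto
  also have "1\<^sub>m d * 0\<^sub>m d n + B * 1\<^sub>m n = B"
    using B by simp
  also have "0\<^sub>m n d * (x \<cdot>\<^sub>m 1\<^sub>m d - B * A) + 1\<^sub>m n * A = A"
    unfolding left_mult_zero_mat[OF minus_carrier_mat[OF BA]] using A by simp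
  finally have "four_block_mat (x \<cdot>\<^sub>m 1\<^sub>m d) B A (1\<^sub>m n) = U * L"
    by simp
  moreover have "Determinant.det U = Determinant.det (1\<^sub>m d) * Determinant.det (1\<^sub>m n :: 'a mat)"
    unfolding U_def by (rule det_four_block_mat_lower_left_zero[OF one_carrier_mat B refl one_carrier_mat])
  moreover have "Determinant.det L = Determinant.det (x \<cdot>\<^sub>m 1\<^sub>m d - B * A) * Determinant.det (1\<^sub>m n :: 'a mat)"
    unfolding L_def by (rule det_four_block_mat_upper_right_zero[OF minus_carrier_mat[OF BA] refl A one_carrier_mat])
  moreover have "U \<in> carrier_mat (d+n) (d+n)" "L \<in> carrier_mat (d+n) (d+n)"
    unfolding U_def L_def using A B BA by auto
  ultimately show ?thesis
    using det_mult[of U "d+n" L] by simp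
qed

text \<open>Sylvester's determinant identity, by computing the determinant of a product of block
  matrices in two ways.\<close>
lemma det_char_mult_comm:
  fixes A B :: "'a::idom mat"
  assumes A: "A \<in> carrier_mat n d" and B: "B \<in> carrier_mat d n"
  shows "x^d * Determinant.det (x \<cdot>\<^sub>m 1\<^sub>m n - A * B) = x^n * Determinant.det (x \<cdot>\<^sub>m 1\<^sub>m d - B * A)"
proof -
  define N1 where "N1 = four_block_mat (1\<^sub>m d) (0\<^sub>m d n) (- A) (x \<cdot>\<^sub>m 1\<^sub>m n)"
  define N2 where "N2 = four_block_mat (x \<cdot>\<^sub>m 1\<^sub>m d) B A (1\<^sub>m n)"
  have AB: "A * B \<in> carrier_mat n n"
    using A B by auto
  have "N1 * N2 = four_block_mat (1\<^sub>m d * (x \<cdot>\<^sub>m 1\<^sub>m d) + 0\<^sub>m d n * A) (1\<^sub>m d * B + 0\<^sub>m d n * 1\<^sub>m n)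
      (- A * (x \<cdot>\<^sub>m 1\<^sub>m d) + (x \<cdot>\<^sub>m 1\<^sub>m n) * A) (- A * B + (x \<cdot>\<^sub>m 1\<^sub>m n) * 1\<^sub>m n)"
    unfolding N1_def N2_def by (rule mult_four_block_mat) (use A B in auto)
  also have "1\<^sub>m d * (x \<cdot>\<^sub>m 1\<^sub>m d) + 0\<^sub>m d n * A = x \<cdot>\<^sub>m 1\<^sub>m d"
    using A by simp
  also have "1\<^sub>m d * B + 0\<^sub>m d n * 1\<^sub>m n = B"
    using B by simp
  also have "- A * (x \<cdot>\<^sub>m 1\<^sub>m d) + (x \<cdot>\<^sub>m 1\<^sub>m n) * A = 0\<^sub>m n d"
  proof -
    have "- A * (x \<cdot>\<^sub>m 1\<^sub>m d) = - (x \<cdot>\<^sub>m A)"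
      using mult_smult_distrib[OF A, of "1\<^sub>m d" d x] A by simp
    moreover have "(x \<cdot>\<^sub>m 1\<^sub>m n) * A = x \<cdot>\<^sub>m A"
      using mult_smult_assoc_mat[of "1\<^sub>m n" n n A d x] A by simp
    ultimately show ?thesis
      using A by simp
  qed
  also have "- A * B + (x \<cdot>\<^sub>m 1\<^sub>m n) * 1\<^sub>m n = x \<cdot>\<^sub>m 1\<^sub>m n - A * B"
    using A B AB by (intro eq_matI) auto
  finally have "Determinant.det (N1 * N2)
      = Determinant.det (x \<cdot>\<^sub>m 1\<^sub>m d) * Determinant.det (x \<cdot>\<^sub>m 1\<^sub>m n - A * B)"
    by (simp only: det_four_block_mat_lower_left_zero[OF smult_carrier_mat[OF one_carrier_mat] B refl
          minus_carrier_mat[OF AB]])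
  moreover have "Determinant.det N1 = Determinant.det (1\<^sub>m d :: 'a mat) * Determinant.det (x \<cdot>\<^sub>m 1\<^sub>m n)"
    unfolding N1_def
    by (rule det_four_block_mat_upper_right_zero[OF one_carrier_mat refl uminus_carrier_mat[OF A]
          smult_carrier_mat[OF one_carrier_mat]])
  moreover have "Determinant.det N2 = Determinant.det (x \<cdot>\<^sub>m 1\<^sub>m d - B * A)"
    unfolding N2_def by (rule det_four_block_mat_schur_complement[OF A B])
  moreover have "N1 \<in> carrier_mat (d+n) (d+n)" "N2 \<in> carrier_mat (d+n) (d+n)"
    unfolding N1_def N2_def using A B by auto
  ultimately show ?thesis
    using det_mult[of N1 "d+n" N2] by (simp add: det_smult)
qed

lemma proots_monom_mult:
  fixes p :: "real poly"
  assumes "p \<noteq> 0"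
  shows "proots (monom 1 k * p) = repeat_mset k {#0#} + proots p"
proof -
  have "proots (monom 1 k * p) = proots (monom 1 k :: real poly) + proots p"
    by (rule proots_mult) (use assms in auto)
  moreover have "monom 1 k = ([:0, 1:] :: real poly) ^ k"
    by (simp add: monom_altdef)
  ultimately show ?thesis
    using proots_linear_factor[of "0::real"] by (simp add: proots_power)
qed

text \<open>\<open>A B\<close> and \<open>B A\<close> have the same non-zero eigenvalues with multiplicities, and zero
  eigenvalues contribute nothing to a sum of square roots.\<close>
lemma sum_sqrt_proots_char_poly_mult_comm:
  fixes A B :: "real mat"
  assumes A: "A \<in> carrier_mat n d" and B: "B \<in> carrier_mat d n"
  shows "sum_mset (image_mset sqrt (proots (char_poly (A * B))))
       = sum_mset (image_mset sqrt (proots (char_poly (B * A))))"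
proof -
  have AB: "A * B \<in> carrier_mat n n" and BA: "B * A \<in> carrier_mat d d"
    using A B by auto
  have char_poly_eval: "poly (char_poly C) x = Determinant.det (x \<cdot>\<^sub>m 1\<^sub>m k - C)"
    if "C \<in> carrier_mat k k" for C :: "real mat" and k x
  proof -
    have "- char_matrix C x = x \<cdot>\<^sub>m 1\<^sub>m k - C"
      unfolding char_matrix_def using that by (intro eq_matI) auto
    then show ?thesis
      using char_poly_matrix[OF that] by simp
  qed
  have "monom 1 d * char_poly (A * B) = monom 1 n * char_poly (B * A)"
  proof (rule poly_ext)
    show "poly (monom 1 d * char_poly (A * B)) x = poly (monom 1 n * char_poly (B * A)) x" for x
      using det_char_mult_comm[OF A B, where x=x] char_poly_eval[OF AB, of x] char_poly_eval[OF BA, of x]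
      by (simp add: poly_monom)
  qed
  then have "repeat_mset d {#0#} + proots (char_poly (A * B))
      = repeat_mset n {#0#} + proots (char_poly (B * A))"
    using degree_monic_char_poly[OF AB] degree_monic_char_poly[OF BA]
    by (metis proots_monom_mult leading_coeff_0_iff one_neq_zero)
  moreover have "sum_mset (image_mset sqrt (repeat_mset k {#0::real#})) = 0" for k
    by (induction k) auto
  ultimately show ?thesis
    by (metis image_mset_union sum_mset.union add.left_neutral)
qed

lemma transpose_conj_mat_mult_self:
  fixes Fu Fv D :: "'a::comm_ring_1 mat"
  assumes Fu: "Fu \<in> carrier_mat m d" and Fv: "Fv \<in> carrier_mat n d" and D: "D \<in> carrier_mat d d"
    and orth: "transpose_mat Fu * Fu = 1\<^sub>m d"
  shows "transpose_mat (Fu * D * transpose_mat Fv) * (Fu * D * transpose_mat Fv)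
       = Fv * (transpose_mat D * D * transpose_mat Fv)"
proof -
  have Dt: "transpose_mat D \<in> carrier_mat d d" and Fut: "transpose_mat Fu \<in> carrier_mat d m"
    and Fvt: "transpose_mat Fv \<in> carrier_mat d n"
    using Fu Fv D by auto
  have DFvt: "D * transpose_mat Fv \<in> carrier_mat d n"
    using D Fvt by simp
  have "transpose_mat (Fu * D * transpose_mat Fv) = Fv * (transpose_mat D * transpose_mat Fu)"
    using transpose_mult[OF mult_carrier_mat[OF Fu D] Fvt] transpose_mult[OF Fu D] by simp
  moreover have "Fu * D * transpose_mat Fv = Fu * (D * transpose_mat Fv)"
    by (rule assoc_mult_mat[OF Fu D Fvt])
  moreover have "Fv * (transpose_mat D * transpose_mat Fu) * (Fu * (D * transpose_mat Fv))
      = Fv * (transpose_mat D * (transpose_mat Fu * (Fu * (D * transpose_mat Fv))))"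
    using Fu Dt Fut DFvt Fv
    by (simp add: assoc_mult_mat[OF Fv _ mult_carrier_mat[OF Fu DFvt]] assoc_mult_mat[OF Dt Fut mult_carrier_mat[OF Fu DFvt]])
  moreover have "transpose_mat Fu * (Fu * (D * transpose_mat Fv)) = D * transpose_mat Fv"
    unfolding assoc_mult_mat[OF Fut Fu DFvt, symmetric] orth by (rule left_mult_one_mat[OF DFvt])
  moreover have "transpose_mat D * (D * transpose_mat Fv) = transpose_mat D * D * transpose_mat Fv"
    by (rule assoc_mult_mat[OF Dt D Fvt, symmetric])
  ultimately show ?thesis
    by simp
qed

lemma mult_transpose_orthonormal_cancel:
  fixes F Y :: "'a::comm_ring_1 mat"
  assumes F: "F \<in> carrier_mat n d" and orth: "transpose_mat F * F = 1\<^sub>m d" and Y: "Y \<in> carrier_mat k d"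
  shows "Y * transpose_mat F * F = Y"
  using assoc_mult_mat[OF Y _ F, of "transpose_mat F"] F Y by (simp add: orth)

lemma nuclear_norm_conj_mat:
  fixes Fu Fv D :: "real mat"
  assumes Fu: "Fu \<in> carrier_mat m d" and Fv: "Fv \<in> carrier_mat n d" and D: "D \<in> carrier_mat d d"
    and orth_u: "transpose_mat Fu * Fu = 1\<^sub>m d" and orth_v: "transpose_mat Fv * Fv = 1\<^sub>m d"
  shows "nuclear_norm (Fu * D * transpose_mat Fv) = nuclear_norm D"
proof -
  have DD: "transpose_mat D * D \<in> carrier_mat d d"
    using D by simp
  have "transpose_mat D * D * transpose_mat Fv \<in> carrier_mat d n"
    using DD Fv by simp
  from sum_sqrt_proots_char_poly_mult_comm[OF Fv this]
  show ?thesis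
    unfolding nuclear_norm_def transpose_conj_mat_mult_self[OF Fu Fv D orth_u]
      mult_transpose_orthonormal_cancel[OF Fv orth_v DD] .
qed

lemma sum_sq_entries_conj_mat:
  fixes Fu Fv E :: "real mat"
  assumes Fu: "Fu \<in> carrier_mat m d" and Fv: "Fv \<in> carrier_mat n d" and E: "E \<in> carrier_mat d d"
    and orth_u: "transpose_mat Fu * Fu = 1\<^sub>m d" and orth_v: "transpose_mat Fv * Fv = 1\<^sub>m d"
  shows "(\<Sum>i<m. \<Sum>j<n. ((Fu * E * transpose_mat Fv) $$ (i,j))^2) = (\<Sum>a<d. \<Sum>b<d. (E $$ (a,b))^2)"
proof -
  have EE: "transpose_mat E * E \<in> carrier_mat d d"
    using E by simp
  have "Fu * E * transpose_mat Fv \<in> carrier_mat m n"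
    using Fu Fv E by simp
  from sum_sq_entries_eq_mat_trace[OF this]
  have "(\<Sum>i<m. \<Sum>j<n. ((Fu * E * transpose_mat Fv) $$ (i,j))^2)
      = mat_trace (Fv * (transpose_mat E * E * transpose_mat Fv))"
    unfolding transpose_conj_mat_mult_self[OF Fu Fv E orth_u] .
  also have "\<dots> = mat_trace (transpose_mat E * E * transpose_mat Fv * Fv)"
    using Fv EE by (intro mat_trace_mult_comm) auto
  also have "\<dots> = mat_trace (transpose_mat E * E)"
    unfolding mult_transpose_orthonormal_cancel[OF Fv orth_v EE] ..
  finally show ?thesis
    using sum_sq_entries_eq_mat_trace[OF E] by simp
qed

lemma index_conj_mat:
  fixes Fu Fv E :: "'a::comm_ring_1 mat"
  assumes Fu: "Fu \<in> carrier_mat m d" and Fv: "Fv \<in> carrier_mat n d" and E: "E \<in> carrier_mat d d"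
    and i: "i < m" and j: "j < n"
  shows "(Fu * E * transpose_mat Fv) $$ (i,j) = (\<Sum>a<d. \<Sum>b<d. Fu $$ (i,a) * E $$ (a,b) * Fv $$ (j,b))"
proof -
  have FE: "Fu * E \<in> carrier_mat m d"
    using Fu E by simp
  have "(Fu * E * transpose_mat Fv) $$ (i,j) = (\<Sum>b<dim_col (Fu * E). (Fu * E) $$ (i,b) * transpose_mat Fv $$ (b,j))"
    by (rule index_mult_mat_sum) (use FE Fv i j in auto)
  also have "\<dots> = (\<Sum>b<d. (Fu * E) $$ (i,b) * Fv $$ (j,b))"
    using FE Fv j by (intro sum.cong) auto
  also have "\<dots> = (\<Sum>b<d. (\<Sum>a<d. Fu $$ (i,a) * E $$ (a,b)) * Fv $$ (j,b))"
    by (intro sum.cong refl) (use index_mult_mat_sum[of i Fu _ E] Fu E i in simp)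
  also have "\<dots> = (\<Sum>a<d. \<Sum>b<d. Fu $$ (i,a) * E $$ (a,b) * Fv $$ (j,b))"
    by (simp add: sum_distrib_right) (rule sum.swap)
  finally show ?thesis .
qed

section \<open>The estimation error\<close>

lemma sum_sq_entries_orthonormal:
  fixes F :: "real mat"
  assumes F: "F \<in> carrier_mat n d" and orth: "transpose_mat F * F = 1\<^sub>m d"
  shows "(\<Sum>i<n. \<Sum>a<d. (F $$ (i,a))^2) = real d"
  unfolding sum_sq_entries_eq_mat_trace[OF F] orth mat_trace_def by simp

lemma dim_le_card_mult_max_row_norm_sq:
  fixes F :: "real mat"
  assumes F: "F \<in> carrier_mat n d" and orth: "transpose_mat F * F = 1\<^sub>m d" and "n > 0"
  shows "real d \<le> real n * (MAX i\<in>{..<n}. row_norm F i)^2"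
proof -
  let ?X = "MAX i\<in>{..<n}. row_norm F i"
  have row_sq: "(row_norm F i)^2 = (\<Sum>a<d. (F $$ (i,a))^2)" for i
    unfolding row_norm_def using F by (simp add: sum_nonneg)
  have "row_norm F i \<le> ?X" if "i < n" for i
    using that by (intro Max_ge) auto
  then have "(row_norm F i)^2 \<le> ?X^2" if "i < n" for i
    using that by (intro power_mono) (auto simp: row_norm_def sum_nonneg)
  then have "(\<Sum>i<n. (row_norm F i)^2) \<le> (\<Sum>i<n. ?X^2)"
    by (intro sum_mono) auto
  then show ?thesis
    unfolding row_sq sum_sq_entries_orthonormal[OF F orth] by simp
qed

definition reveal_indicator :: "bool \<times> bool \<Rightarrow> real" where
  "reveal_indicator y = (if fst y \<and> snd y then 1 else 0)"

lemma reveal_indicator_cases: "reveal_indicator y = 0 \<or> reveal_indicator y = 1"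
  unfolding reveal_indicator_def by simp

lemma index_A_of:
  "i < m \<Longrightarrow> j < n \<Longrightarrow> A_of m n w $$ (i,j) = reveal_indicator (w (i,j))"
  unfolding A_of_def reveal_indicator_def by simp

lemma A_of_carrier: "A_of m n w \<in> carrier_mat m n"
  unfolding A_of_def by simp

lemma A_of_binary: "\<forall>i<m. \<forall>j<n. A_of m n w $$ (i,j) \<in> {0,1}"
  using index_A_of reveal_indicator_cases by auto

text \<open>The correction term is linear in the centred label \<open>a - \<mu> (1 - \<rho>)\<close>, which has mean
  zero: this is the unbiasedness of the shifted loss.\<close>
lemma loss_tilde_excess:
  assumes a: "a = 0 \<or> a = 1" and "\<rho> < 1"
  shows "(\<mu> - x)^2 = loss_tilde \<rho> x a - loss_tilde \<rho> \<mu> a + 2 / (1 - \<rho>) * ((a - \<mu> * (1 - \<rho>)) * (x - \<mu>))"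
proof -
  define q where "q = 1 / (1 - \<rho>)"
  have q: "q * (1 - \<rho>) = 1"
    unfolding q_def using \<open>\<rho> < 1\<close> by simp
  have loss: "loss_tilde \<rho> z a = z^2 + a * q * (1 - 2 * z)" for z
  proof -
    have "((z - 1)^2 - \<rho> * z^2) / (1 - \<rho>) = z^2 + q * (1 - 2 * z)"
      unfolding q_def using \<open>\<rho> < 1\<close> by (simp add: field_simps power2_eq_square)
    then show ?thesis
      using a unfolding loss_tilde_def by auto
  qed
  have "loss_tilde \<rho> x a - loss_tilde \<rho> \<mu> a + 2 * q * ((a - \<mu> * (1 - \<rho>)) * (x - \<mu>)) - (\<mu> - x)^2
      = -2 * \<mu> * (x - \<mu>) * (q * (1 - \<rho>) - 1)"
    unfolding loss by (simp add: algebra_simps power2_eq_square)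
  then show ?thesis
    using q unfolding q_def by simp
qed

text \<open>Bounding the projected noise in Frobenius rather than spectral norm, the logarithmic
  factor of the stated bound is only needed to dominate a constant.\<close>
lemma capped_radius_le:
  fixes t \<gamma> r s :: real and d :: nat
  assumes t: "t \<ge> 0" and \<gamma>: "0 < \<gamma>" "\<gamma> \<le> 1" and r: "r > 0" and s: "real d \<le> s" and "d > 0"
  shows "min (2 * t) r * \<gamma> * d \<le> r + 2 * t * sqrt (ln (2 * d)) * \<gamma> * s"
proof (cases "d = 1")
  case True
  have "(1/2)^2 \<le> ln (2::real)"
    using ln2_ge_two_thirds by (simp add: power2_eq_square)
  then have l: "1 \<le> 2 * sqrt (ln (2 * real d))"
    using True real_le_rsqrt by fastforce
  have "min (2 * t) r * \<gamma> \<le> r + t * \<gamma> * s"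
  proof (cases "2 * t \<le> r")
    case True
    have "t * \<gamma> \<le> t"
      using t \<gamma> by (auto intro: mult_left_le)
    moreover have "t * \<gamma> * 1 \<le> t * \<gamma> * s"
      using t \<gamma> s \<open>d = 1\<close> by (intro mult_left_mono) auto
    ultimately show ?thesis
      using True t by (simp add: min_def)
  next
    case False
    have "r * \<gamma> \<le> r" "0 \<le> t * \<gamma> * s"
      using t \<gamma> r s \<open>d = 1\<close> by (auto intro: mult_left_le)
    with False show ?thesis
      by (simp add: min_def)
  qed
  also have "t * \<gamma> * s \<le> 2 * t * sqrt (ln (2 * d)) * \<gamma> * s"
    using mult_right_mono[OF l, of "t * \<gamma> * s"] t \<gamma> s \<open>d = 1\<close> by (simp add: mult_ac)
  finally show ?thesis
    using True by simp
next
  case False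
  then have "ln (4::real) \<le> ln (2 * d)"
    using \<open>d > 0\<close> by (subst ln_le_cancel_iff) auto
  moreover have "ln (4::real) = 2 * ln 2"
    using ln_realpow[of 2 2] by simp
  ultimately have l: "1 \<le> sqrt (ln (2 * real d))"
    using ln2_ge_two_thirds by simp
  have "min (2 * t) r * \<gamma> * d \<le> 2 * t * \<gamma> * s"
    using t \<gamma> s by (intro mult_mono) auto
  also have "\<dots> \<le> 2 * t * sqrt (ln (2 * d)) * \<gamma> * s"
    using mult_right_mono[OF l, of "2 * t * \<gamma> * s"] t \<gamma> s \<open>d > 0\<close> by (simp add: mult_ac)
  finally show ?thesis
    using r by simp
qed

lemma concentration_threshold_le:
  fixes N \<delta> :: real
  assumes "N > 0" "0 < \<delta>" "\<delta> < 1"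
  shows "sqrt (N * ln (1 / \<delta>) / 2) + sqrt N \<le> 3 * sqrt N * sqrt (ln (2 / \<delta>))"
proof -
  have "ln 2 \<le> ln (2 / \<delta>)" "ln (1 / \<delta>) \<le> ln (2 / \<delta>)" "0 \<le> ln (1 / \<delta>)"
    using assms by (auto simp: field_simps)
  then have "(1/2)^2 \<le> ln (2 / \<delta>)" and "ln (1 / \<delta>) / 2 \<le> ln (2 / \<delta>)"
    using ln2_ge_two_thirds by (auto simp: power2_eq_square)
  from this(1) have half: "1/2 \<le> sqrt (ln (2 / \<delta>))"
    by (rule real_le_rsqrt)
  have "sqrt (N * ln (1 / \<delta>) / 2) \<le> sqrt N * sqrt (ln (2 / \<delta>))"
    using \<open>ln (1 / \<delta>) / 2 \<le> ln (2 / \<delta>)\<close> assms(1) by (simp add: real_sqrt_mult[symmetric] mult_left_mono)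
  moreover have "sqrt N * 1 \<le> sqrt N * (2 * sqrt (ln (2 / \<delta>)))"
    using half assms(1) by (intro mult_left_mono) auto
  ultimately show ?thesis
    by simp
qed

locale inductive_pu_model =
  fixes M Fu Fv :: "real mat" and m n d :: nat and t \<rho> :: real
  assumes m_pos: "m > 0" and n_pos: "n > 0"
    and M_carrier: "M \<in> carrier_mat m n"
    and M_range: "\<forall>i<m. \<forall>j<n. 0 \<le> M $$ (i,j) \<and> M $$ (i,j) \<le> 1"
    and nuclear_M: "nuclear_norm M \<le> t"
    and rho_nonneg: "0 \<le> \<rho>" and rho_less_1: "\<rho> < 1"
    and Fu_carrier: "Fu \<in> carrier_mat m d" and Fv_carrier: "Fv \<in> carrier_mat n d"
    and Fu_orth: "transpose_mat Fu * Fu = 1\<^sub>m d" and Fv_orth: "transpose_mat Fv * Fv = 1\<^sub>m d"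
    and M_in_span: "M = Fu * transpose_mat Fu * M * Fv * transpose_mat Fv"
begin

abbreviation cells :: "(nat \<times> nat) set" where
  "cells \<equiv> {..<m} \<times> {..<n}"

definition cell_pmf :: "nat \<times> nat \<Rightarrow> (bool \<times> bool) pmf" where
  "cell_pmf k = pair_pmf (bernoulli_pmf (M $$ k)) (bernoulli_pmf (1 - \<rho>))"

definition noise :: "(nat \<times> nat \<Rightarrow> bool \<times> bool) \<Rightarrow> nat \<Rightarrow> nat \<Rightarrow> real" where
  "noise w i j = reveal_indicator (w (i,j)) - M $$ (i,j) * (1 - \<rho>)"

definition candidates :: "real mat set" where
  "candidates = {Fu * D * transpose_mat Fv | D. feasible_D Fu Fv d t D}"

definition deviation :: "(nat \<times> nat \<Rightarrow> bool \<times> bool) \<Rightarrow> real mat \<Rightarrow> real" where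
  "deviation w X = (\<Sum>i<m. \<Sum>j<n. noise w i j * (X $$ (i,j) - M $$ (i,j)))"

definition sup_deviation :: "(nat \<times> nat \<Rightarrow> bool \<times> bool) \<Rightarrow> real" where
  "sup_deviation w = (SUP X\<in>candidates. deviation w X)"

definition projected_noise :: "(nat \<times> nat \<Rightarrow> bool \<times> bool) \<Rightarrow> nat \<Rightarrow> nat \<Rightarrow> real" where
  "projected_noise w a b = (\<Sum>i<m. \<Sum>j<n. noise w i j * (Fu $$ (i,a) * Fv $$ (j,b)))"

definition projected_noise_norm :: "(nat \<times> nat \<Rightarrow> bool \<times> bool) \<Rightarrow> real" where
  "projected_noise_norm w = sqrt (\<Sum>a<d. \<Sum>b<d. (projected_noise w a b)^2)"

definition radius :: real where
  "radius = min (2 * t) (sqrt (real m * real n))"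

lemma sample_pmf_eq: "sample_pmf M \<rho> = Pi_pmf cells (False, False) cell_pmf"
  unfolding sample_pmf_def cell_pmf_def using M_carrier
  by (auto intro!: arg_cong[where f="Pi_pmf _ _"])

lemma finite_set_sample_pmf: "finite (set_pmf (sample_pmf M \<rho>))"
  unfolding sample_pmf_eq by (rule finite_set_Pi_pmf) simp

lemma M_in_candidates: "M \<in> candidates"
proof -
  define D where "D = transpose_mat Fu * M * Fv"
  have D: "D \<in> carrier_mat d d"
    unfolding D_def using Fu_carrier Fv_carrier M_carrier by simp
  have FuM: "transpose_mat Fu * M \<in> carrier_mat d n"
    using Fu_carrier M_carrier by simp
  have "Fu * transpose_mat Fu * M = Fu * (transpose_mat Fu * M)"
    using Fu_carrier M_carrier by (intro assoc_mult_mat) auto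
  moreover have "Fu * (transpose_mat Fu * M) * Fv = Fu * (transpose_mat Fu * M * Fv)"
    by (rule assoc_mult_mat[OF Fu_carrier FuM Fv_carrier])
  ultimately have DM: "Fu * D * transpose_mat Fv = M"
    using M_in_span unfolding D_def by simp
  have "nuclear_norm D \<le> t"
    using nuclear_norm_conj_mat[OF Fu_carrier Fv_carrier D Fu_orth Fv_orth] nuclear_M
    by (simp add: DM)
  then have "feasible_D Fu Fv d t D"
    unfolding feasible_D_def DM using D M_range Fu_carrier Fv_carrier by simp
  then show ?thesis
    unfolding candidates_def using DM by blast
qed

lemma candidate_range:
  assumes "X \<in> candidates" "i < m" "j < n"
  shows "0 \<le> X $$ (i,j) \<and> X $$ (i,j) \<le> 1"
  using assms Fu_carrier Fv_carrier unfolding candidates_def feasible_D_def by auto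

lemma abs_candidate_minus_M_le_1:
  assumes "X \<in> candidates" "i < m" "j < n"
  shows "\<bar>X $$ (i,j) - M $$ (i,j)\<bar> \<le> 1"
  using candidate_range[OF assms] M_range[rule_format, OF assms(2,3)] by (auto simp: abs_le_iff)

lemma abs_noise_le_1:
  assumes "i < m" "j < n"
  shows "\<bar>noise w i j\<bar> \<le> 1"
proof -
  have "0 \<le> M $$ (i,j) * (1 - \<rho>)" "M $$ (i,j) * (1 - \<rho>) \<le> 1"
    using M_range assms rho_nonneg rho_less_1 by (auto simp: mult_le_one)
  then show ?thesis
    unfolding noise_def using reveal_indicator_cases[of "w (i,j)"] by auto
qed

lemma abs_deviation_le:
  assumes "X \<in> candidates"
  shows "\<bar>deviation w X\<bar> \<le> real m * real n"
proof -
  have "\<bar>deviation w X\<bar> \<le> (\<Sum>i<m. \<Sum>j<n. \<bar>noise w i j\<bar> * \<bar>X $$ (i,j) - M $$ (i,j)\<bar>)"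
    unfolding deviation_def abs_mult[symmetric] by (rule order_trans[OF sum_abs sum_mono]) (rule sum_abs)
  also have "\<dots> \<le> (\<Sum>i<m. \<Sum>j<n. 1)"
    using abs_noise_le_1 abs_candidate_minus_M_le_1[OF assms]
    by (intro sum_mono) (auto intro: mult_le_one)
  finally show ?thesis
    by simp
qed

lemma deviation_le_sup_deviation:
  assumes "X \<in> candidates"
  shows "deviation w X \<le> sup_deviation w"
  unfolding sup_deviation_def
  by (rule cSup_upper) (use assms abs_deviation_le in \<open>auto intro!: bdd_aboveI[of _ "real m * real n"] dest: abs_le_D1\<close>)

lemma deviation_update_le:
  assumes "k \<in> cells" "X \<in> candidates"
  shows "\<bar>deviation (w(k:=y)) X - deviation w X\<bar> \<le> 1"
proof -
  obtain i0 j0 where k: "k = (i0, j0)" "i0 < m" "j0 < n"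
    using assms(1) by auto
  define c where "c = (reveal_indicator y - reveal_indicator (w k)) * (X $$ (i0,j0) - M $$ (i0,j0))"
  have "deviation (w(k:=y)) X - deviation w X
      = (\<Sum>i<m. \<Sum>j<n. (noise (w(k:=y)) i j - noise w i j) * (X $$ (i,j) - M $$ (i,j)))"
    unfolding deviation_def by (simp add: sum_subtractf left_diff_distrib)
  also have "\<dots> = (\<Sum>i<m. \<Sum>j<n. if i = i0 then (if j = j0 then c else 0) else 0)"
    by (intro sum.cong refl) (auto simp: noise_def c_def k)
  also have "\<dots> = (\<Sum>i<m. if i = i0 then (\<Sum>j<n. if j = j0 then c else 0) else 0)"
    by (intro sum.cong refl) auto
  also have "\<dots> = c"
    using k by (simp add: sum.delta)
  finally have "deviation (w(k:=y)) X - deviation w X = c" .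
  moreover have "\<bar>reveal_indicator y - reveal_indicator (w k)\<bar> \<le> 1"
    using reveal_indicator_cases[of y] reveal_indicator_cases[of "w k"] by auto
  ultimately show ?thesis
    using abs_candidate_minus_M_le_1[OF assms(2) k(2,3)]
    unfolding c_def by (metis abs_ge_zero abs_mult mult_le_one)
qed

lemma sup_deviation_update_le:
  assumes "k \<in> cells"
  shows "\<bar>sup_deviation (w(k:=y)) - sup_deviation w\<bar> \<le> 1"
proof -
  have upper: "sup_deviation (w(k:=y)) \<le> sup_deviation w + 1" for w y
    unfolding sup_deviation_def[of "w(k:=y)"]
  proof (rule cSup_least)
    show "deviation (w(k:=y)) ` candidates \<noteq> {}"
      using M_in_candidates by blast
    fix z
    assume "z \<in> deviation (w(k:=y)) ` candidates"
    then obtain X where X: "X \<in> candidates" and z: "z = deviation (w(k:=y)) X"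
      by blast
    show "z \<le> sup_deviation w + 1"
      using deviation_update_le[OF assms X, of w y] deviation_le_sup_deviation[OF X, of w] z
      by linarith
  qed
  from upper[of "w(k:=y)" "w k"] upper[of w y]
  show ?thesis
    by simp
qed

lemma sq_error_le_sup_deviation:
  assumes opt: "optimal_D \<rho> Fu Fv d t (A_of m n w) D"
  shows "(\<Sum>i<m. \<Sum>j<n. (M $$ (i,j) - (Fu * D * transpose_mat Fv) $$ (i,j))^2) \<le> 2 / (1 - \<rho>) * sup_deviation w"
proof -
  let ?A = "A_of m n w" and ?X = "Fu * D * transpose_mat Fv"
  obtain DM where DM: "feasible_D Fu Fv d t DM" "Fu * DM * transpose_mat Fv = M"
    using M_in_candidates unfolding candidates_def by auto
  have X: "?X \<in> candidates" and le: "objective \<rho> Fu Fv ?A D \<le> objective \<rho> Fu Fv ?A DM"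
    using opt DM(1) unfolding optimal_D_def candidates_def by auto
  have "(M $$ (i,j) - ?X $$ (i,j))^2 = loss_tilde \<rho> (?X $$ (i,j)) (?A $$ (i,j))
      - loss_tilde \<rho> (M $$ (i,j)) (?A $$ (i,j)) + 2 / (1 - \<rho>) * (noise w i j * (?X $$ (i,j) - M $$ (i,j)))"
    if "i < m" "j < n" for i j
    unfolding noise_def index_A_of[OF that]
    by (rule loss_tilde_excess[OF reveal_indicator_cases rho_less_1])
  then have "(\<Sum>i<m. \<Sum>j<n. (M $$ (i,j) - ?X $$ (i,j))^2)
      = objective \<rho> Fu Fv ?A D - objective \<rho> Fu Fv ?A DM + 2 / (1 - \<rho>) * deviation w ?X"
    using Fu_carrier Fv_carrier
    by (simp add: objective_def deviation_def DM(2) sum.distrib sum_subtractf sum_distrib_left)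
  also have "\<dots> \<le> 2 / (1 - \<rho>) * deviation w ?X"
    using le by simp
  also have "\<dots> \<le> 2 / (1 - \<rho>) * sup_deviation w"
    using deviation_le_sup_deviation[OF X] rho_less_1 by (intro mult_left_mono) auto
  finally show ?thesis .
qed

lemma candidate_minus_M_conj:
  assumes "X \<in> candidates"
  obtains E where "E \<in> carrier_mat d d"
    and "\<And>i j. i < m \<Longrightarrow> j < n \<Longrightarrow> X $$ (i,j) - M $$ (i,j) = (Fu * E * transpose_mat Fv) $$ (i,j)"
    and "L2_set (\<lambda>p. E $$ p) ({..<d} \<times> {..<d}) \<le> 2 * t"
proof -
  obtain D DM where D: "feasible_D Fu Fv d t D" "X = Fu * D * transpose_mat Fv"
    and DM: "feasible_D Fu Fv d t DM" "M = Fu * DM * transpose_mat Fv"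
    using assms M_in_candidates unfolding candidates_def by auto
  have Dc: "D \<in> carrier_mat d d" "DM \<in> carrier_mat d d"
    using D DM unfolding feasible_D_def by auto
  define E where "E = D - DM"
  have E: "E \<in> carrier_mat d d"
    unfolding E_def by (rule minus_carrier_mat[OF Dc(2)])
  have E_entry: "E $$ (a,b) = D $$ (a,b) - DM $$ (a,b)" if "a < d" "b < d" for a b
    unfolding E_def using that Dc by simp
  have diff: "X $$ (i,j) - M $$ (i,j) = (Fu * E * transpose_mat Fv) $$ (i,j)" if "i < m" "j < n" for i j
    unfolding D(2) DM(2) index_conj_mat[OF Fu_carrier Fv_carrier Dc(1) that]
      index_conj_mat[OF Fu_carrier Fv_carrier Dc(2) that] index_conj_mat[OF Fu_carrier Fv_carrier E that]
    by (simp add: E_entry sum_subtractf[symmetric] algebra_simps)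
  have "L2_set (\<lambda>p. E $$ p) ({..<d} \<times> {..<d}) = L2_set (\<lambda>p. D $$ p + - DM $$ p) ({..<d} \<times> {..<d})"
    by (intro L2_set_cong refl) (auto simp: E_entry)
  also have "\<dots> \<le> L2_set (\<lambda>p. D $$ p) ({..<d} \<times> {..<d}) + L2_set (\<lambda>p. - DM $$ p) ({..<d} \<times> {..<d})"
    by (rule L2_set_triangle_ineq)
  also have "\<dots> \<le> 2 * t"
    using frobenius_le_nuclear_norm[OF Dc(1)] frobenius_le_nuclear_norm[OF Dc(2)] D(1) DM(1)
    unfolding L2_set_times_lessThan feasible_D_def by simp
  finally show ?thesis
    using E diff by (intro that) auto
qed

lemma L2_set_candidate_conj_le:
  assumes "X \<in> candidates" and E: "E \<in> carrier_mat d d"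
    and diff: "\<And>i j. i < m \<Longrightarrow> j < n \<Longrightarrow> X $$ (i,j) - M $$ (i,j) = (Fu * E * transpose_mat Fv) $$ (i,j)"
  shows "L2_set (\<lambda>p. E $$ p) ({..<d} \<times> {..<d}) \<le> sqrt (real m * real n)"
proof -
  have "(\<Sum>a<d. \<Sum>b<d. (E $$ (a,b))^2) = (\<Sum>i<m. \<Sum>j<n. ((Fu * E * transpose_mat Fv) $$ (i,j))^2)"
    by (rule sum_sq_entries_conj_mat[OF Fu_carrier Fv_carrier E Fu_orth Fv_orth, symmetric])
  also have "\<dots> = (\<Sum>i<m. \<Sum>j<n. (X $$ (i,j) - M $$ (i,j))^2)"
    by (intro sum.cong refl) (simp add: diff)
  also have "\<dots> \<le> (\<Sum>i<m. \<Sum>j<n. 1)"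
    using abs_candidate_minus_M_le_1[OF assms(1)]
    by (intro sum_mono) (simp add: abs_square_le_1)
  finally show ?thesis
    unfolding L2_set_times_lessThan by simp
qed

lemma deviation_le_radius:
  assumes "X \<in> candidates"
  shows "deviation w X \<le> radius * projected_noise_norm w"
proof -
  obtain E where E: "E \<in> carrier_mat d d"
    and diff: "\<And>i j. i < m \<Longrightarrow> j < n \<Longrightarrow> X $$ (i,j) - M $$ (i,j) = (Fu * E * transpose_mat Fv) $$ (i,j)"
    and "L2_set (\<lambda>p. E $$ p) ({..<d} \<times> {..<d}) \<le> 2 * t"
    using candidate_minus_M_conj[OF assms] by blast
  with L2_set_candidate_conj_le[OF assms E diff]
  have E_small: "L2_set (\<lambda>p. E $$ p) ({..<d} \<times> {..<d}) \<le> radius"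
    unfolding radius_def by simp
  let ?G = "\<lambda>p. projected_noise w (fst p) (snd p)"
  have "deviation w X = (\<Sum>i<m. \<Sum>j<n. \<Sum>a<d. \<Sum>b<d. E $$ (a,b) * (noise w i j * (Fu $$ (i,a) * Fv $$ (j,b))))"
    unfolding deviation_def
    by (intro sum.cong refl) (simp add: diff index_conj_mat[OF Fu_carrier Fv_carrier E] sum_distrib_left mult_ac)
  also have "\<dots> = (\<Sum>a<d. \<Sum>b<d. E $$ (a,b) * projected_noise w a b)"
    unfolding projected_noise_def sum_distrib_left
    by (subst sum.swap, subst (2) sum.swap, rule sum.cong[OF refl], subst sum.swap, subst (2) sum.swap) simp
  also have "\<dots> = (\<Sum>p\<in>{..<d} \<times> {..<d}. E $$ p * ?G p)"
    by (simp add: sum.cartesian_product case_prod_beta)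
  also have "\<dots> \<le> (\<Sum>p\<in>{..<d} \<times> {..<d}. \<bar>E $$ p\<bar> * \<bar>?G p\<bar>)"
    by (intro sum_mono) (metis abs_ge_self abs_mult)
  also have "\<dots> \<le> L2_set (\<lambda>p. E $$ p) ({..<d} \<times> {..<d}) * L2_set ?G ({..<d} \<times> {..<d})"
    by (rule L2_set_mult_ineq)
  also have "L2_set ?G ({..<d} \<times> {..<d}) = projected_noise_norm w"
    unfolding projected_noise_norm_def L2_set_times_lessThan by simp
  also have "L2_set (\<lambda>p. E $$ p) ({..<d} \<times> {..<d}) * projected_noise_norm w \<le> radius * projected_noise_norm w"
    using E_small by (rule mult_right_mono) (simp add: projected_noise_norm_def sum_nonneg)
  finally show ?thesis .
qed

lemma sup_deviation_le_radius: "sup_deviation w \<le> radius * projected_noise_norm w"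
  unfolding sup_deviation_def
  by (rule cSup_least) (use M_in_candidates deviation_le_radius in auto)

lemma t_nonneg: "t \<ge> 0"
  using frobenius_le_nuclear_norm[OF M_carrier] nuclear_M
  by (meson order_trans real_sqrt_ge_zero sum_nonneg zero_le_power2)

lemma expectation_cell_pmf_centred:
  assumes "k \<in> cells"
  shows "measure_pmf.expectation (cell_pmf k) (\<lambda>y. reveal_indicator y - M $$ k * (1 - \<rho>)) = 0"
    and "measure_pmf.expectation (cell_pmf k) (\<lambda>y. (reveal_indicator y - M $$ k * (1 - \<rho>))^2) \<le> 1 - \<rho>"
proof -
  define q r where "q = M $$ k" and "r = 1 - \<rho>"
  have q: "0 \<le> q" "q \<le> 1" and r: "0 \<le> r" "r \<le> 1"
    unfolding q_def r_def using assms M_range rho_nonneg rho_less_1 by auto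
  have indicator: "reveal_indicator (True, True) = 1" "reveal_indicator (True, False) = 0"
    "reveal_indicator (False, True) = 0" "reveal_indicator (False, False) = 0"
    unfolding reveal_indicator_def by auto
  show "measure_pmf.expectation (cell_pmf k) (\<lambda>y. reveal_indicator y - M $$ k * (1 - \<rho>)) = 0"
    unfolding cell_pmf_def q_def[symmetric] r_def[symmetric]
    by (subst expectation_pair_bernoulli_pmf[OF q r]) (simp add: indicator algebra_simps)
  have "measure_pmf.expectation (cell_pmf k) (\<lambda>y. (reveal_indicator y - M $$ k * (1 - \<rho>))^2)
      = q * r * (1 - q * r)"
    unfolding cell_pmf_def q_def[symmetric] r_def[symmetric]
    by (subst expectation_pair_bernoulli_pmf[OF q r]) (simp add: indicator algebra_simps power2_eq_square)
  also have "\<dots> \<le> q * r * 1"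
    using q r by (intro mult_left_mono) auto
  also have "\<dots> \<le> r"
    using q r by (simp add: mult_left_le_one_le)
  finally show "measure_pmf.expectation (cell_pmf k) (\<lambda>y. (reveal_indicator y - M $$ k * (1 - \<rho>))^2) \<le> 1 - \<rho>"
    unfolding r_def .
qed

lemma expectation_projected_noise_sq:
  "measure_pmf.expectation (sample_pmf M \<rho>) (\<lambda>w. (projected_noise w a b)^2)
     \<le> (1 - \<rho>) * (\<Sum>k\<in>cells. (Fu $$ (fst k, a) * Fv $$ (snd k, b))^2)"
proof -
  define c where "c k = Fu $$ (fst k, a) * Fv $$ (snd k, b)" for k :: "nat \<times> nat"
  define \<alpha> where "\<alpha> k y = reveal_indicator y - M $$ k * (1 - \<rho>)" for k :: "nat \<times> nat" and y
  have "projected_noise w a b = (\<Sum>k\<in>cells. c k * \<alpha> k (w k))" for w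
    unfolding projected_noise_def c_def \<alpha>_def noise_def
    by (subst sum.cartesian_product) (rule sum.cong, auto simp: mult_ac)
  then have "measure_pmf.expectation (sample_pmf M \<rho>) (\<lambda>w. (projected_noise w a b)^2)
      = measure_pmf.expectation (Pi_pmf cells (False, False) cell_pmf) (\<lambda>w. (\<Sum>k\<in>cells. c k * \<alpha> k (w k))^2)"
    unfolding sample_pmf_eq by simp
  also have "\<dots> = (\<Sum>k\<in>cells. (c k)^2 * measure_pmf.expectation (cell_pmf k) (\<lambda>y. (\<alpha> k y)^2))"
    by (rule expectation_Pi_pmf_sum_sq) (auto simp: \<alpha>_def expectation_cell_pmf_centred(1))
  also have "\<dots> \<le> (\<Sum>k\<in>cells. (c k)^2 * (1 - \<rho>))"
    unfolding \<alpha>_def by (intro sum_mono mult_left_mono expectation_cell_pmf_centred(2)) auto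
  finally show ?thesis
    by (simp add: c_def sum_distrib_left mult_ac)
qed

lemma expectation_projected_noise_norm_le:
  "measure_pmf.expectation (sample_pmf M \<rho>) projected_noise_norm \<le> sqrt (1 - \<rho>) * d"
proof -
  have sq: "(projected_noise_norm w)^2 = (\<Sum>a<d. \<Sum>b<d. (projected_noise w a b)^2)" for w
    unfolding projected_noise_norm_def by (simp add: sum_nonneg)
  have "measure_pmf.expectation (sample_pmf M \<rho>) (\<lambda>w. (projected_noise_norm w)^2)
      = (\<Sum>a<d. \<Sum>b<d. measure_pmf.expectation (sample_pmf M \<rho>) (\<lambda>w. (projected_noise w a b)^2))"
    unfolding sq
    by (simp add: Bochner_Integration.integral_sum integrable_measure_pmf_finite finite_set_sample_pmf)
  also have "\<dots> \<le> (\<Sum>a<d. \<Sum>b<d. (1 - \<rho>) * (\<Sum>k\<in>cells. (Fu $$ (fst k, a) * Fv $$ (snd k, b))^2))"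
    by (intro sum_mono expectation_projected_noise_sq)
  also have "\<dots> = (1 - \<rho>) * (\<Sum>k\<in>cells. \<Sum>a<d. \<Sum>b<d. (Fu $$ (fst k, a) * Fv $$ (snd k, b))^2)"
  proof -
    have "(\<Sum>a<d. \<Sum>b<d. \<Sum>k\<in>cells. g a b k) = (\<Sum>k\<in>cells. \<Sum>a<d. \<Sum>b<d. g a b k)"
      for g :: "nat \<Rightarrow> nat \<Rightarrow> nat \<times> nat \<Rightarrow> real"
      by (subst sum.cong[OF refl sum.swap]) (rule sum.swap)
    then show ?thesis
      by (simp only: sum_distrib_left[symmetric])
  qed
  also have "\<dots> = (1 - \<rho>) * (\<Sum>k\<in>cells. (\<Sum>a<d. (Fu $$ (fst k, a))^2) * (\<Sum>b<d. (Fv $$ (snd k, b))^2))"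
    by (simp add: power_mult_distrib sum_product)
  also have "\<dots> = (1 - \<rho>) * ((\<Sum>i<m. \<Sum>a<d. (Fu $$ (i,a))^2) * (\<Sum>j<n. \<Sum>b<d. (Fv $$ (j,b))^2))"
  proof -
    have "(\<Sum>k\<in>cells. f (fst k) * g (snd k)) = (\<Sum>i<m. f i) * (\<Sum>j<n. g j)" for f g :: "nat \<Rightarrow> real"
      unfolding sum_product by (subst sum.cartesian_product) (rule sum.cong, auto)
    from this[of "\<lambda>i. \<Sum>a<d. (Fu $$ (i,a))^2" "\<lambda>j. \<Sum>b<d. (Fv $$ (j,b))^2"]
    show ?thesis
      by (simp only:)
  qed
  also have "\<dots> = (1 - \<rho>) * d^2"
    unfolding sum_sq_entries_orthonormal[OF Fu_carrier Fu_orth] sum_sq_entries_orthonormal[OF Fv_carrier Fv_orth]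
    by (simp add: power2_eq_square)
  finally have "sqrt (measure_pmf.expectation (sample_pmf M \<rho>) (\<lambda>w. (projected_noise_norm w)^2))
      \<le> sqrt ((1 - \<rho>) * d^2)"
    by simp
  also have "\<dots> = sqrt (1 - \<rho>) * d"
    by (simp add: real_sqrt_mult)
  finally show ?thesis
    using expectation_le_sqrt_second_moment[OF finite_set_sample_pmf, of projected_noise_norm] by simp
qed

lemma expectation_sup_deviation_le:
  "measure_pmf.expectation (sample_pmf M \<rho>) sup_deviation \<le> radius * sqrt (1 - \<rho>) * d"
proof -
  have "radius \<ge> 0"
    unfolding radius_def using t_nonneg by simp
  have "measure_pmf.expectation (sample_pmf M \<rho>) sup_deviation
      \<le> measure_pmf.expectation (sample_pmf M \<rho>) (\<lambda>w. radius * projected_noise_norm w)"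
    by (intro integral_mono_AE)
       (auto intro: integrable_measure_pmf_finite finite_set_sample_pmf sup_deviation_le_radius)
  also have "\<dots> \<le> radius * (sqrt (1 - \<rho>) * d)"
    using expectation_projected_noise_norm_le \<open>radius \<ge> 0\<close> by (simp add: mult_left_mono)
  finally show ?thesis
    by (simp add: mult_ac)
qed

lemma sup_deviation_concentration:
  assumes "0 < \<delta>" "\<delta> < 1"
  shows "measure_pmf.prob (sample_pmf M \<rho>)
           {w. sup_deviation w < measure_pmf.expectation (sample_pmf M \<rho>) sup_deviation
                 + sqrt (real m * real n * ln (1 / \<delta>) / 2)} \<ge> 1 - \<delta>"
proof -
  let ?Q = "sample_pmf M \<rho>"
  let ?\<tau> = "sqrt (real m * real n * ln (1 / \<delta>) / 2)"
  let ?bad = "{w. sup_deviation w \<ge> measure_pmf.expectation ?Q sup_deviation + ?\<tau>}"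
  have "card cells = m * n" "?\<tau> > 0"
    using assms m_pos n_pos by (auto simp: card_cartesian_product)
  then have "measure_pmf.prob ?Q ?bad \<le> exp (- 2 * ?\<tau>^2 / (1^2 * real (m * n)))"
    unfolding sample_pmf_eq
    using mcdiarmid_Pi_pmf[of cells 1 ?\<tau> sup_deviation, OF _ _ _ _ sup_deviation_update_le] m_pos n_pos
    by simp
  also have "?\<tau>^2 = real m * real n * ln (1 / \<delta>) / 2"
    using assms by (intro real_sqrt_pow2) simp
  also have "exp (- 2 * (real m * real n * ln (1 / \<delta>) / 2) / (1^2 * real (m * n))) = \<delta>"
    using assms m_pos n_pos by (simp add: ln_div)
  finally have "measure_pmf.prob ?Q ?bad \<le> \<delta>" .
  moreover have "measure_pmf.prob ?Q (space (measure_pmf ?Q) - ?bad) = 1 - measure_pmf.prob ?Q ?bad"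
    by (rule measure_pmf.prob_compl) simp
  ultimately show ?thesis
    by (simp add: set_diff_eq not_le)
qed

lemma dim_le_sqrt_mult_max_row_norms:
  "real d \<le> sqrt (real m * real n) * (MAX i\<in>{..<m}. row_norm Fu i) * (MAX j\<in>{..<n}. row_norm Fv j)"
proof -
  let ?Xu = "MAX i\<in>{..<m}. row_norm Fu i" and ?Xv = "MAX j\<in>{..<n}. row_norm Fv j"
  have "row_norm Fu 0 \<le> ?Xu" "row_norm Fv 0 \<le> ?Xv"
    using m_pos n_pos by (intro Max_ge; simp)+
  moreover have "0 \<le> row_norm F i" for F i
    unfolding row_norm_def by (intro real_sqrt_ge_zero sum_nonneg) simp
  ultimately have "0 \<le> ?Xu" "0 \<le> ?Xv"
    by (meson order_trans)+
  have "(real d)^2 \<le> (real m * ?Xu^2) * (real n * ?Xv^2)"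
    unfolding power2_eq_square[of "real d"]
    using dim_le_card_mult_max_row_norm_sq[OF Fu_carrier Fu_orth m_pos]
      dim_le_card_mult_max_row_norm_sq[OF Fv_carrier Fv_orth n_pos]
    by (intro mult_mono) auto
  also have "\<dots> = (sqrt (real m * real n) * ?Xu * ?Xv)^2"
    by (simp add: power_mult_distrib real_sqrt_mult)
  finally show ?thesis
    by (rule power2_le_imp_le) (use \<open>0 \<le> ?Xu\<close> \<open>0 \<le> ?Xv\<close> in simp)
qed

lemma mean_sq_error_le:
  assumes opt: "optimal_D \<rho> Fu Fv d t (A_of m n w) D" and \<delta>: "0 < \<delta>" "\<delta> < 1" and "d > 0"
    and concentrated: "sup_deviation w < measure_pmf.expectation (sample_pmf M \<rho>) sup_deviation
                                        + sqrt (real m * real n * ln (1 / \<delta>) / 2)"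
  shows "1 / (real m * real n) * (\<Sum>i<m. \<Sum>j<n. (M $$ (i,j) - (Fu * D * transpose_mat Fv) $$ (i,j))^2)
     \<le> 6 * sqrt (ln (2 / \<delta>)) / (sqrt (real m * real n) * (1 - \<rho>))
       + 4 * t * sqrt (ln (2 * real d)) / (sqrt (real m * real n) * sqrt (1 - \<rho>))
         * (MAX i\<in>{..<m}. row_norm Fu i) * (MAX j\<in>{..<n}. row_norm Fv j)"
proof -
  define N where "N = real m * real n"
  define \<gamma> where "\<gamma> = sqrt (1 - \<rho>)"
  define x where "x = sqrt (ln (2 / \<delta>))"
  define l where "l = sqrt (ln (2 * real d))"
  define Xu where "Xu = (MAX i\<in>{..<m}. row_norm Fu i)"
  define Xv where "Xv = (MAX j\<in>{..<n}. row_norm Fv j)"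
  have N: "N > 0" and \<gamma>: "0 < \<gamma>" "\<gamma> \<le> 1" "\<gamma> * \<gamma> = 1 - \<rho>"
    unfolding N_def \<gamma>_def using m_pos n_pos rho_nonneg rho_less_1 by auto
  have "radius * \<gamma> * d \<le> sqrt N + 2 * t * l * \<gamma> * (sqrt N * Xu * Xv)"
    unfolding radius_def N_def l_def Xu_def Xv_def
    using capped_radius_le[OF t_nonneg \<gamma>(1,2) _ dim_le_sqrt_mult_max_row_norms \<open>d > 0\<close>] m_pos n_pos
    by simp
  then have "sup_deviation w \<le> 3 * sqrt N * x + 2 * t * l * \<gamma> * (sqrt N * Xu * Xv)"
    using concentrated expectation_sup_deviation_le concentration_threshold_le[OF N \<delta>]
    unfolding N_def x_def \<gamma>_def by linarith
  then have "(\<Sum>i<m. \<Sum>j<n. (M $$ (i,j) - (Fu * D * transpose_mat Fv) $$ (i,j))^2)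
      \<le> 2 / (1 - \<rho>) * (3 * sqrt N * x + 2 * t * l * \<gamma> * (sqrt N * Xu * Xv))"
    using rho_less_1 by (intro order_trans[OF sq_error_le_sup_deviation[OF opt]] mult_left_mono) auto
  then have "1 / N * (\<Sum>i<m. \<Sum>j<n. (M $$ (i,j) - (Fu * D * transpose_mat Fv) $$ (i,j))^2)
      \<le> 1 / (sqrt N * sqrt N) * (2 / (\<gamma> * \<gamma>) * (3 * sqrt N * x + 2 * t * l * \<gamma> * (sqrt N * Xu * Xv)))"
    unfolding real_sqrt_mult_self \<gamma>(3) abs_of_pos[OF N] using N by (intro mult_left_mono) auto
  also have "\<dots> = 6 * x / (sqrt N * (\<gamma> * \<gamma>)) + 4 * t * l / (sqrt N * \<gamma>) * Xu * Xv"
  proof -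
    have alg: "1 / (a * a) * (2 / (g * g) * (3 * a * x + 2 * t * l * g * (a * u * v)))
        = 6 * x / (a * (g * g)) + 4 * t * l / (a * g) * u * v" if "a > 0" "g > 0" for a g u v :: real
      using that by (simp add: field_simps)
    show ?thesis
      by (rule alg) (use N \<gamma>(1) in simp_all)
  qed
  finally show ?thesis
    unfolding N_def x_def l_def Xu_def Xv_def \<gamma>_def using rho_less_1 by simp
qed

end

theorem theorem6:
  fixes M Fu Fv :: "real mat" and m n d :: nat and t \<rho> \<delta> :: real
    and Dhat :: "real mat \<Rightarrow> real mat"
  assumes "m > 0" and "n > 0" and "d > 0"
    and "M \<in> carrier_mat m n"
    and "\<forall>i<m. \<forall>j<n. 0 \<le> M $$ (i,j) \<and> M $$ (i,j) \<le> 1"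
    and "nuclear_norm M \<le> t"
    and "0 \<le> \<rho>" and "\<rho> < 1"
    and "0 < \<delta>" and "\<delta> < 1"
    and "Fu \<in> carrier_mat m d" and "Fv \<in> carrier_mat n d"
    and "transpose_mat Fu * Fu = 1\<^sub>m d" and "transpose_mat Fv * Fv = 1\<^sub>m d"
    and "M = Fu * transpose_mat Fu * M * Fv * transpose_mat Fv"
    and "\<forall>A \<in> carrier_mat m n. (\<forall>i<m. \<forall>j<n. A $$ (i,j) \<in> {0,1}) \<longrightarrow>
           optimal_D \<rho> Fu Fv d t A (Dhat A)"
  shows "measure_pmf.prob (sample_pmf M \<rho>)
           {\<omega>. let Mhat = Fu * Dhat (A_of m n \<omega>) * transpose_mat Fv in
              (1 / (real m * real n)) * (\<Sum>i<m. \<Sum>j<n. (M $$ (i,j) - Mhat $$ (i,j))^2)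
              \<le> 6 * sqrt (ln (2 / \<delta>)) / (sqrt (real m * real n) * (1 - \<rho>))
                + 4 * t * sqrt (ln (2 * real d)) / (sqrt (real m * real n) * sqrt (1 - \<rho>))
                  * (MAX i\<in>{..<m}. row_norm Fu i) * (MAX j\<in>{..<n}. row_norm Fv j)}
         \<ge> 1 - \<delta>"
proof -
  interpret inductive_pu_model M Fu Fv m n d t \<rho>
    using assms by unfold_locales auto
  have optimal: "optimal_D \<rho> Fu Fv d t (A_of m n w) (Dhat (A_of m n w))" for w
    using assms(16) A_of_carrier A_of_binary by blast
  show ?thesis
    using mean_sq_error_le[OF optimal assms(9,10,3)]
    by (intro order_trans[OF sup_deviation_concentration[OF assms(9,10)] measure_pmf.finite_measure_mono])
       (auto simp: Let_def)
qed

end
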